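(* Let $\mathbf{a}$ be a CSCA and $\xi\in\mathcal{P}^2$ a non-zero vector with $\mathbf{a}\xi=\xi$. Then $\mathbf{a}$ is periodic with period two, i.e. $\mathbf{a}^2=\mathbb{1}$ (equivalently $\mathrm{tr}\,\mathbf{a}=0$).
   Context: $\mathcal{P}$ is the ring of Laurent polynomials in $u$ over $\mathbb{Z}_2$, $\mathcal{R}$ its subring of palindromes ($p(u^{-1})=p(u)$). A CSCA is a $2\times2$ matrix with entries in $\mathcal{R}$ and determinant $1$, acting on $\mathcal{P}^2$. *)

theory Defs
  imports "HOL-Analysis.Analysis" "HOL-Library.Z2" "HOL-Computational_Algebra.Formal_Laurent_Series"
begin

text \<open>Laurent polynomials over Z_2: formal Laurent series over the field bit
  with finitely many non-zero coefficients (the ring P).\<close>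
definition laurent_poly :: "bit fls \<Rightarrow> bool" where
  "laurent_poly p \<longleftrightarrow> finite {n. fls_nth p n \<noteq> 0}"

text \<open>Palindromes (the subring R): p(u^-1) = p(u), i.e. coefficient of u^(-n) equals that of u^n.\<close>
definition palindrome :: "bit fls \<Rightarrow> bool" where
  "palindrome p \<longleftrightarrow> laurent_poly p \<and> (\<forall>n. fls_nth p (-n) = fls_nth p n)"

definition CSCA :: "bit fls ^ 2 ^ 2 \<Rightarrow> bool" where
  "CSCA a \<longleftrightarrow> (\<forall>i j. palindrome (a $ i $ j)) \<and> det a = 1"

end

theory Submission
  imports Defs
begin

text \<open>Only \<open>det a = 1\<close> and characteristic 2 matter; the palindromic entries and the
  polynomiality of \<open>\<xi>\<close> are not needed, and the argument works over any field of characteristic 2.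
  A non-zero fixed vector makes \<open>a - 1\<close> singular, and for \<open>2\<times>2\<close> matrices
  \<open>det (a - 1) = det a - tr a + 1 = tr a\<close> in characteristic 2. With \<open>tr a = 0\<close>,
  Cayley--Hamilton gives \<open>a\<^sup>2 = tr a \<cdot> a - det a = -1 = 1\<close>.\<close>

lemma CHAR_bit: "CHAR(bit) = 2"
proof (rule CHAR_eqI)
  have "of_nat x = (of_bool (odd x) :: bit)" for x
    by (induction x) auto
  then show "of_nat x = (0::bit) \<Longrightarrow> 2 dvd x" for x
    by simp
qed simp

lemma det_2_diff_mat_1:
  fixes A :: "'a::comm_ring_1^2^2"
  shows "det (A - mat 1) = det A - trace A + 1"
  by (simp add: det_2 trace_def sum_2 mat_def algebra_simps)

lemma det_diff_mat_1_eq_0_if_fixed_vector: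
  fixes A :: "'a::field^'n^'n"
  assumes "A *v x = x" and "x \<noteq> 0"
  shows "det (A - mat 1) = 0"
proof -
  have "(A - mat 1) *v x = 0"
    using assms(1) by (simp add: matrix_vector_mult_diff_rdistrib)
  then have "\<not> invertible (A - mat 1)"
    using assms(2) by (metis invertible_left_inverse matrix_vector_mul_assoc matrix_vector_mul_lid matrix_vector_mult_0_right)
  then show ?thesis
    by (simp add: invertible_det_nz)
qed

lemma cayley_hamilton_2:
  fixes A :: "'a::comm_ring_1^2^2"
  shows "A ** A = mat (trace A) ** A - mat (det A)"
  by (simp add: vec_eq_iff forall_2 matrix_matrix_mult_def mat_def sum_2 det_2 trace_def algebra_simps)

lemma trace_eq_0_if_fixed_vector_CHAR_2:
  fixes A :: "'a::field^2^2"
  assumes "CHAR('a) = 2" and "det A = 1" and "A *v x = x" and "x \<noteq> 0"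
  shows "trace A = 0"
proof -
  have "0 = det A - trace A + 1"
    using det_diff_mat_1_eq_0_if_fixed_vector[OF assms(3,4)] by (simp add: det_2_diff_mat_1)
  also have "\<dots> = trace A + (1 + 1)"
    using assms(1,2) by (simp add: minus_CHAR_2 algebra_simps)
  also have "1 + 1 = (0::'a)"
    using assms(1) by (metis one_add_one uminus_CHAR_2 add_eq_0_iff)
  finally show ?thesis by simp
qed

lemma square_eq_mat_1_if_trace_0_CHAR_2:
  fixes A :: "'a::comm_ring_1^2^2"
  assumes "CHAR('a) = 2" and "det A = 1" and "trace A = 0"
  shows "A ** A = mat 1"
proof -
  have "A ** A = - mat 1"
    using assms(2,3) by (simp add: cayley_hamilton_2)
  also have "\<dots> = mat 1"
    using assms(1) by (simp add: vec_eq_iff mat_def uminus_CHAR_2)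
  finally show ?thesis .
qed

theorem mainTheorem6:
  fixes a :: "bit fls ^ 2 ^ 2" and \<xi> :: "bit fls ^ 2"
  assumes "CSCA a"
    and "\<forall>i. laurent_poly (\<xi> $ i)"
    and "\<xi> \<noteq> 0"
    and "a *v \<xi> = \<xi>"
  shows "a ** a = mat 1 \<and> trace a = 0"
proof -
  have char: "CHAR(bit fls) = 2"
    by (simp add: CHAR_bit)
  have det: "det a = 1"
    using assms(1) by (simp add: CSCA_def)
  have "trace a = 0"
    using trace_eq_0_if_fixed_vector_CHAR_2[OF char det assms(4,3)] .
  with square_eq_mat_1_if_trace_0_CHAR_2[OF char det] show ?thesis
    by simp
qed

end
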